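(* Let $r$ be a ring of an $m$-partial SCS that crosses itself at a crossing point $c$ between circles $C_i$ and $C_j$. Then every starving robot in $r$ passes through $c$ periodically, alternating between the two crossing directions (from $C_i$ to $C_j$ and from $C_j$ to $C_i$).
   Context: Let $T=\{C_1,\dots,C_n\}$ be pairwise disjoint unit circles in the plane (trajectories) and $\epsilon<0.5$ a communication range. The graph of potential links $G_\epsilon(T)$ has the circle centers as nodes and an edge $\{i,j\}$ whenever the centers of $C_i,C_j$ are at distance at most $2+\epsilon$; it is assumed connected. Points of a circle are identified with angles (modulo $2\pi$), and a robot traverses a circle in one time unit. A schedule is a pair $(f,g)$, $f:T\to[0,2\pi)$, $g:T\to\{-1,1\}$ ($1$ = counterclockwise); the robot on $C_i$ is at angle $f(C_i)+2\pi g(C_i)t$ at time $t$. A communication graph $G=(V,E)$ is a connected spanning subgraph of $G_\epsilon(T)$. The link position $\phi_{ij}$ is the point of $C_i$ closest to $C_j$. A schedule is $G$-synchronized if for every $\{i,j\}\in E$ the robot on $C_i$ is at $\phi_{ij}$ exactly when the robot on $C_j$ is at $\phi_{ji}$. An SCS with communication graph $G$ consists of $n$ robots, one per circle, moving under a $G$-synchronized schedule with $g(C_i)=-g(C_j)$ for all $\{i,j\}\in E$. Shifting protocol: when a robot on $C_i$ reaches $\phi_{ij}$ and there is no robot at $\phi_{ji}$, it moves to $C_j$ and thereafter follows the schedule of $C_j$. An $m$-partial SCS is obtained by removing $n-m$ robots, the remaining $m$ applying the shifting protocol. A surviving robot starves if every time it arrives at a link position the corresponding neighbor is absent. A ring is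 the closed path traversed by a starving robot (following the assigned direction on each circle and always shifting to the neighboring circle at link positions). The crossing point of neighboring circles $C_i,C_j$ is the midpoint of the segment joining $\phi_{ij}$ and $\phi_{ji}$; it can be traversed in two crossing directions, $C_i\to C_j$ and $C_j\to C_i$. A ring crosses itself at a crossing point if it traverses that point in both crossing directions. *)

theory Defs
  imports Complex_Main
begin

text \<open>Circle C_i is the unit circle
  with centre p i, for i < n. Angles on a circle are real numbers; the point at
  angle a on C_i is p i + cis a (so angles are implicitly taken modulo 2 pi).\<close>

definition linkpt :: "(nat \<Rightarrow> complex) \<Rightarrow> nat \<Rightarrow> nat \<Rightarrow> complex" where
  "linkpt p i j = p i + (p j - p i) / complex_of_real (cmod (p j - p i))"

text \<open>Crossing point of neighbouring circles C_i, C_j (for documentation; a crossing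
  point is identified with the unordered pair of circles, and a crossing direction
  C_a -> C_b with the ordered pair (a,b)).\<close>
definition crossing_point :: "(nat \<Rightarrow> complex) \<Rightarrow> nat \<Rightarrow> nat \<Rightarrow> complex" where
  "crossing_point p i j = (linkpt p i j + linkpt p j i) / 2"

definition valid_trajectories :: "nat \<Rightarrow> (nat \<Rightarrow> complex) \<Rightarrow> real \<Rightarrow> bool" where
  "valid_trajectories n p \<epsilon> \<longleftrightarrow> 0 < \<epsilon> \<and> \<epsilon> < 1/2 \<and>
     (\<forall>i<n. \<forall>j<n. i \<noteq> j \<longrightarrow> cmod (p i - p j) > 2)"

definition comm_graph :: "nat \<Rightarrow> (nat \<Rightarrow> complex) \<Rightarrow> real \<Rightarrow> nat set set \<Rightarrow> bool" where
  "comm_graph n p \<epsilon> E \<longleftrightarrow>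
     E \<subseteq> {{i, j} | i j. i < n \<and> j < n \<and> i \<noteq> j \<and> cmod (p i - p j) \<le> 2 + \<epsilon>} \<and>
     (\<forall>i<n. \<forall>j<n. (i, j) \<in> {(a, b). {a, b} \<in> E}\<^sup>*)"

definition robot_pos :: "(nat \<Rightarrow> complex) \<Rightarrow> (nat \<Rightarrow> real) \<Rightarrow> (nat \<Rightarrow> real) \<Rightarrow> nat \<Rightarrow> real \<Rightarrow> complex" where
  "robot_pos p f g i t = p i + cis (f i + 2 * pi * g i * t)"

definition schedule :: "nat \<Rightarrow> (nat \<Rightarrow> real) \<Rightarrow> (nat \<Rightarrow> real) \<Rightarrow> bool" where
  "schedule n f g \<longleftrightarrow> (\<forall>i<n. 0 \<le> f i \<and> f i < 2 * pi \<and> (g i = 1 \<or> g i = -1))"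

definition synchronized :: "(nat \<Rightarrow> complex) \<Rightarrow> (nat \<Rightarrow> real) \<Rightarrow> (nat \<Rightarrow> real) \<Rightarrow> nat set set \<Rightarrow> bool" where
  "synchronized p f g E \<longleftrightarrow>
     (\<forall>i j. {i, j} \<in> E \<longrightarrow>
        (\<forall>t. robot_pos p f g i t = linkpt p i j \<longleftrightarrow> robot_pos p f g j t = linkpt p j i))"

definition SCS :: "nat \<Rightarrow> (nat \<Rightarrow> complex) \<Rightarrow> real \<Rightarrow> nat set set \<Rightarrow> (nat \<Rightarrow> real) \<Rightarrow> (nat \<Rightarrow> real) \<Rightarrow> bool" where
  "SCS n p \<epsilon> E f g \<longleftrightarrow> valid_trajectories n p \<epsilon> \<and> comm_graph n p \<epsilon> E \<and> schedule n f g \<and>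
     synchronized p f g E \<and> (\<forall>i j. {i, j} \<in> E \<longrightarrow> g i = - g j)"

text \<open>Motion of a starving robot (a traversal of a ring): from time tau 0 on it is on
  circle k 0; during (tau s, tau (s+1)) it is on circle k s following its schedule and
  meets no link position; at time tau (s+1) it is at the link position phi_{k s, k (s+1)}
  and shifts to C_{k (s+1)}, i.e. it always shifts at every link position reached.\<close>
definition ring_traversal :: "nat \<Rightarrow> (nat \<Rightarrow> complex) \<Rightarrow> (nat \<Rightarrow> real) \<Rightarrow> (nat \<Rightarrow> real) \<Rightarrow> nat set set
     \<Rightarrow> (nat \<Rightarrow> nat) \<Rightarrow> (nat \<Rightarrow> real) \<Rightarrow> bool" where
  "ring_traversal n p f g E k \<tau> \<longleftrightarrow> k 0 < n \<and> (\<forall>s. \<tau> s < \<tau> (Suc s)) \<and>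
     (\<forall>s. {k s, k (Suc s)} \<in> E \<and> robot_pos p f g (k s) (\<tau> (Suc s)) = linkpt p (k s) (k (Suc s))) \<and>
     (\<forall>s t l. \<tau> s < t \<and> t < \<tau> (Suc s) \<and> {k s, l} \<in> E \<longrightarrow> robot_pos p f g (k s) t \<noteq> linkpt p (k s) l)"

definition crosses :: "(nat \<Rightarrow> nat) \<Rightarrow> (nat \<Rightarrow> real) \<Rightarrow> nat \<Rightarrow> nat \<Rightarrow> real \<Rightarrow> bool" where
  "crosses k \<tau> a b t \<longleftrightarrow> (\<exists>s. k s = a \<and> k (Suc s) = b \<and> \<tau> (Suc s) = t)"

definition ring_crosses_itself :: "(nat \<Rightarrow> nat) \<Rightarrow> nat \<Rightarrow> nat \<Rightarrow> bool" where
  "ring_crosses_itself k i j \<longleftrightarrow>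
     (\<exists>s. k s = i \<and> k (Suc s) = j) \<and> (\<exists>s. k s = j \<and> k (Suc s) = i)"

end

theory Submission
  imports Defs
begin

text \<open>A starving robot moves deterministically in both directions of time: the schedule
  of a circle C is periodic and the link positions of C are distinct, so the link through
  which the robot enters C determines the link through which it leaves C and the time spent
  on C, and vice versa.
  Hence the sequence of transitions (k s, k (s+1)) is a reversible dynamics on a finite set
  and therefore purely periodic, and with it the crossing times. If two consecutive
  crossings of c had the same direction, their distance would be a period of the
  transitions, so the opposite crossing, which occurs somewhere, would occur in between.\<close>

lemma robot_pos_shift:
  assumes "robot_pos p f g c u = robot_pos p f g c v"
  shows "robot_pos p f g c (t + (v - u)) = robot_pos p f g c t"
proof -
  define u' where "u' = f c + 2 * pi * g c * u"
  define v' where "v' = f c + 2 * pi * g c * v"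
  define a where "a = f c + 2 * pi * g c * t"
  have "cis u' = cis v'" using assms unfolding robot_pos_def u'_def v'_def by simp
  then have "cis (a + (v' - u')) = cis a"
    by (simp add: cis_mult[symmetric] cis_divide[symmetric])
  moreover have "f c + 2 * pi * g c * (t + (v - u)) = a + (v' - u')"
    unfolding a_def u'_def v'_def by (simp add: algebra_simps)
  ultimately show ?thesis unfolding robot_pos_def a_def by (simp add: add.assoc)
qed

lemma linkpt_eq_imp_dist:
  assumes "linkpt p c l = linkpt p c l'" "p l \<noteq> p c" "p l' \<noteq> p c"
  shows "cmod (p l - p l') = \<bar>cmod (p l - p c) - cmod (p l' - p c)\<bar>"
proof -
  define r where "r = cmod (p l - p c)"
  define r' where "r' = cmod (p l' - p c)"
  define u where "u = (p l - p c) / complex_of_real r"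
  have r: "r \<noteq> 0" "r' \<noteq> 0" using assms(2,3) unfolding r_def r'_def by auto
  have "p l - p c = complex_of_real r * u" using r unfolding u_def by simp
  moreover have "p l' - p c = complex_of_real r' * u"
    using assms(1) r unfolding u_def linkpt_def r_def r'_def by (simp add: field_simps)
  ultimately have "p l - p l' = complex_of_real (r - r') * u" by (simp add: algebra_simps)
  moreover have "cmod u = 1" using r unfolding u_def r_def by (simp add: norm_divide)
  ultimately show ?thesis unfolding r_def r'_def by (simp add: norm_mult del: of_real_diff)
qed

lemma comm_graph_edgeD:
  assumes "comm_graph n p \<epsilon> E" "{a, b} \<in> E"
  shows "a < n \<and> b < n \<and> a \<noteq> b \<and> cmod (p a - p b) \<le> 2 + \<epsilon>"
proof -
  obtain i j where "{a, b} = {i, j}" "i < n" "j < n" "i \<noteq> j" "cmod (p i - p j) \<le> 2 + \<epsilon>"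
    using assms unfolding comm_graph_def by blast
  then show ?thesis by (auto simp: doubleton_eq_iff norm_minus_commute)
qed

lemma linkpt_inj:
  assumes "valid_trajectories n p \<epsilon>" "comm_graph n p \<epsilon> E"
    and "{c, l} \<in> E" "{c, l'} \<in> E" "linkpt p c l = linkpt p c l'"
  shows "l = l'"
proof (rule ccontr)
  assume "l \<noteq> l'"
  note cl = comm_graph_edgeD[OF assms(2,3)] and cl' = comm_graph_edgeD[OF assms(2,4)]
  have far: "2 < cmod (p l - p c)" "2 < cmod (p l' - p c)" "2 < cmod (p l - p l')"
    using assms(1) cl cl' \<open>l \<noteq> l'\<close> unfolding valid_trajectories_def by auto
  moreover have "cmod (p l - p c) \<le> 2 + \<epsilon>" "cmod (p l' - p c) \<le> 2 + \<epsilon>" "\<epsilon> < 1/2"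
    using cl cl' assms(1) by (auto simp: norm_minus_commute valid_trajectories_def)
  moreover have "cmod (p l - p l') = \<bar>cmod (p l - p c) - cmod (p l' - p c)\<bar>"
    using far by (intro linkpt_eq_imp_dist assms(5)) auto
  ultimately show False by linarith
qed

lemma reversible_recurrence_periodic:
  fixes x :: "nat \<Rightarrow> 'a"
  assumes fwd: "\<And>a b. x a = x b \<Longrightarrow> x (Suc a) = x (Suc b)"
    and bwd: "\<And>a b. x (Suc a) = x (Suc b) \<Longrightarrow> x a = x b"
    and "x a = x (a + Q)"
  shows "x (m + Q) = x m"
proof -
  have backward: "x (b + i) = x (c + i) \<Longrightarrow> x b = x c" for b c i
  proof (induction i arbitrary: b c)
    case (Suc i)
    have "x (Suc b + i) = x (Suc c + i)" using Suc.prems by simp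
    then show ?case using Suc.IH bwd by metis
  qed simp
  have forward: "x b = x c \<Longrightarrow> x (b + i) = x (c + i)" for b c i
  proof (induction i)
    case (Suc i)
    then show ?case using fwd[of "b + i" "c + i"] by simp
  qed simp
  have "x 0 = x Q" using backward[of 0 a Q] assms(3) by (simp add: add.commute)
  from forward[OF this, of m] show ?thesis by (simp add: add.commute)
qed

lemma finite_range_reversible_periodic:
  fixes x :: "nat \<Rightarrow> 'a"
  assumes "finite (range x)"
    and "\<And>a b. x a = x b \<Longrightarrow> x (Suc a) = x (Suc b)"
    and "\<And>a b. x (Suc a) = x (Suc b) \<Longrightarrow> x a = x b"
  shows "\<exists>P > 0. \<forall>m. x (m + P) = x m"
proof -
  have "\<not> inj x"
  proof
    assume "inj x"
    with assms(1) have "finite (UNIV :: nat set)" by (rule finite_imageD)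
    then show False by simp
  qed
  then obtain a b where "a < b" "x a = x b"
    unfolding inj_def by (metis linorder_neqE_nat)
  then have "x a = x (a + (b - a))" by simp
  then have "\<forall>m. x (m + (b - a)) = x m"
    using reversible_recurrence_periodic[of x, OF assms(2,3)] by blast
  with \<open>a < b\<close> show ?thesis by (intro exI[of _ "b - a"]) simp
qed

lemma periodic_attains_in_window:
  fixes x :: "nat \<Rightarrow> 'a"
  assumes "\<And>m. x (m + Q) = x m" "Q > 0"
  shows "\<exists>v. s \<le> v \<and> v < s + Q \<and> x v = x u"
proof -
  have multiple: "x (m + c * Q) = x m" for m c
  proof (induction c)
    case (Suc c)
    have "x (m + Suc c * Q) = x ((m + c * Q) + Q)" by (simp add: algebra_simps)
    then show ?case using assms(1) Suc.IH by simp
  qed simp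
  define w where "w = u + s * Q"
  have "s \<le> w" using assms(2) unfolding w_def by (simp add: trans_le_add2)
  define v where "v = s + (w - s) mod Q"
  have "w = v + (w - s) div Q * Q"
    using \<open>s \<le> w\<close> div_mult_mod_eq[of "w - s" Q] unfolding v_def by linarith
  then have "x v = x u" using multiple[of v] multiple[of u s] unfolding w_def by metis
  moreover have "s \<le> v" "v < s + Q" using assms(2) unfolding v_def by simp_all
  ultimately show ?thesis by blast
qed

locale starving_robot =
  fixes n p \<epsilon> E f g k \<tau>
  assumes scs: "SCS n p \<epsilon> E f g"
    and traversal: "ring_traversal n p f g E k \<tau>"
begin

definition transition :: "nat \<Rightarrow> nat \<times> nat" where
  "transition s = (k s, k (Suc s))"

lemma edge: "{k s, k (Suc s)} \<in> E"
  using traversal unfolding ring_traversal_def by blast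

lemma edge_ends: "k s < n \<and> k (Suc s) < n \<and> k s \<noteq> k (Suc s)"
  using comm_graph_edgeD[OF _ edge] scs unfolding SCS_def by blast

lemma leaves_at_link: "robot_pos p f g (k s) (\<tau> (Suc s)) = linkpt p (k s) (k (Suc s))"
  using traversal unfolding ring_traversal_def by blast

lemma arrives_at_link: "robot_pos p f g (k (Suc s)) (\<tau> (Suc s)) = linkpt p (k (Suc s)) (k s)"
  using scs edge[of s] leaves_at_link[of s] unfolding SCS_def synchronized_def by blast

lemma link_time_outside:
  assumes "robot_pos p f g (k s) t = linkpt p (k s) l" "{k s, l} \<in> E"
  shows "t \<le> \<tau> s \<or> \<tau> (Suc s) \<le> t"
  using assms traversal unfolding ring_traversal_def by (meson linorder_not_le)

lemma tau_less: "a < b \<Longrightarrow> \<tau> a < \<tau> b"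
  using traversal unfolding ring_traversal_def by (simp add: strict_mono_Suc_iff strict_mono_less)

lemma link_inj: "{c, l} \<in> E \<Longrightarrow> {c, l'} \<in> E \<Longrightarrow> linkpt p c l = linkpt p c l' \<Longrightarrow> l = l'"
  using linkpt_inj scs unfolding SCS_def by blast

text \<open>Two stays on the same circle that start at the same phase of its schedule end at the
  same phase, towards the same neighbour: otherwise the earlier end would be a link position
  met during the other stay.\<close>

lemma next_link_shift:
  assumes "k a = k b" "\<And>t. robot_pos p f g (k a) (t + d) = robot_pos p f g (k a) t"
    and "\<tau> b = \<tau> a + d"
  shows "\<tau> (Suc b) = \<tau> (Suc a) + d \<and> k (Suc b) = k (Suc a)"
proof -
  have "\<tau> (Suc a) + d \<le> \<tau> b \<or> \<tau> (Suc b) \<le> \<tau> (Suc a) + d"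
    using link_time_outside[of b "\<tau> (Suc a) + d" "k (Suc a)"] edge[of a] assms(1,2)
      leaves_at_link[of a] by simp
  moreover have "\<tau> (Suc b) - d \<le> \<tau> a \<or> \<tau> (Suc a) \<le> \<tau> (Suc b) - d"
    using link_time_outside[of a "\<tau> (Suc b) - d" "k (Suc b)"] edge[of b] assms(1)
      assms(2)[of "\<tau> (Suc b) - d"] leaves_at_link[of b] by simp
  ultimately have times: "\<tau> (Suc b) = \<tau> (Suc a) + d"
    using assms(3) tau_less[of a "Suc a"] tau_less[of b "Suc b"] by linarith
  then have "linkpt p (k a) (k (Suc a)) = linkpt p (k a) (k (Suc b))"
    using assms(1) assms(2)[of "\<tau> (Suc a)"] leaves_at_link[of a] leaves_at_link[of b]
    by simp
  then show ?thesis using times link_inj edge[of a] edge[of b] assms(1) by metis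
qed

lemma previous_link_shift:
  assumes "k (Suc a) = k (Suc b)"
    and "\<And>t. robot_pos p f g (k (Suc a)) (t + d) = robot_pos p f g (k (Suc a)) t"
    and "\<tau> (Suc (Suc b)) = \<tau> (Suc (Suc a)) + d"
  shows "k b = k a"
proof -
  have "\<tau> (Suc a) + d \<le> \<tau> (Suc b) \<or> \<tau> (Suc (Suc b)) \<le> \<tau> (Suc a) + d"
    using link_time_outside[of "Suc b" "\<tau> (Suc a) + d" "k a"] edge[of a] assms(1,2)
      arrives_at_link[of a] by (simp add: insert_commute)
  moreover have "\<tau> (Suc b) - d \<le> \<tau> (Suc a) \<or> \<tau> (Suc (Suc a)) \<le> \<tau> (Suc b) - d"
    using link_time_outside[of "Suc a" "\<tau> (Suc b) - d" "k b"] edge[of b] assms(1)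
      assms(2)[of "\<tau> (Suc b) - d"] arrives_at_link[of b] by (simp add: insert_commute)
  ultimately have "\<tau> (Suc b) = \<tau> (Suc a) + d"
    using assms(3) tau_less[of "Suc a" "Suc (Suc a)"] tau_less[of "Suc b" "Suc (Suc b)"]
    by linarith
  then have "linkpt p (k (Suc a)) (k a) = linkpt p (k (Suc a)) (k b)"
    using assms(1) assms(2)[of "\<tau> (Suc a)"] arrives_at_link[of a] arrives_at_link[of b]
    by simp
  moreover have "{k (Suc a), k a} \<in> E" "{k (Suc a), k b} \<in> E"
    using edge[of a] edge[of b] assms(1) by (simp_all add: insert_commute)
  ultimately show ?thesis using link_inj by metis
qed

lemma transition_next:
  assumes "transition a = transition b"
  shows "transition (Suc a) = transition (Suc b) \<and>
    \<tau> (Suc (Suc b)) - \<tau> (Suc b) = \<tau> (Suc (Suc a)) - \<tau> (Suc a)"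
proof -
  have same: "k a = k b" "k (Suc a) = k (Suc b)" using assms by (simp_all add: transition_def)
  then have "robot_pos p f g (k (Suc a)) (\<tau> (Suc a)) = robot_pos p f g (k (Suc a)) (\<tau> (Suc b))"
    using arrives_at_link[of a] arrives_at_link[of b] by simp
  from robot_pos_shift[OF this]
  have "\<tau> (Suc (Suc b)) = \<tau> (Suc (Suc a)) + (\<tau> (Suc b) - \<tau> (Suc a)) \<and>
      k (Suc (Suc b)) = k (Suc (Suc a))"
    using next_link_shift[OF same(2), of "\<tau> (Suc b) - \<tau> (Suc a)"] by simp
  then show ?thesis using same by (simp add: transition_def)
qed

lemma transition_prev:
  assumes "transition (Suc a) = transition (Suc b)"
  shows "transition a = transition b"
proof -
  have same: "k (Suc a) = k (Suc b)" "k (Suc (Suc a)) = k (Suc (Suc b))"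
    using assms by (simp_all add: transition_def)
  then have "robot_pos p f g (k (Suc a)) (\<tau> (Suc (Suc a))) =
      robot_pos p f g (k (Suc a)) (\<tau> (Suc (Suc b)))"
    using leaves_at_link[of "Suc a"] leaves_at_link[of "Suc b"] by simp
  from robot_pos_shift[OF this] have "k b = k a"
    using previous_link_shift[OF same(1), of "\<tau> (Suc (Suc b)) - \<tau> (Suc (Suc a))"] by simp
  then show ?thesis using same by (simp add: transition_def)
qed

lemma transition_period:
  assumes "transition a = transition b" "a < b"
  shows "transition (m + (b - a)) = transition m"
proof (rule reversible_recurrence_periodic)
  show "transition a = transition (a + (b - a))" using assms by simp
qed (use transition_next transition_prev in blast)+

lemma transition_periodic: "\<exists>P > 0. \<forall>m. transition (m + P) = transition m"
proof (rule finite_range_reversible_periodic)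
  have "range transition \<subseteq> {..<n} \<times> {..<n}" using edge_ends by (auto simp: transition_def)
  then show "finite (range transition)" using finite_subset by blast
qed (use transition_next transition_prev in blast)+

context
  fixes P :: nat
  assumes P: "P > 0" and periodic: "\<And>m. transition (m + P) = transition m"
begin

lemma tau_periodic: "\<tau> (Suc m + P) = \<tau> (Suc m) + (\<tau> (Suc P) - \<tau> 1)"
proof (induction m)
  case (Suc m)
  then show ?case using transition_next[OF periodic[of m, symmetric]] by simp
qed simp

text \<open>Shifting the arrival at circle k P = k 0 back by one period T gives a time at which
  the robot is at a link position of k 0 before leaving it at tau 1, so that time precedes
  the first stay.\<close>

lemma tau_first_period: "\<tau> P \<le> \<tau> 0 + (\<tau> (Suc P) - \<tau> 1)"
proof -
  obtain q where q: "P = Suc q" using P by (cases P) auto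
  have same: "transition P = transition 0" using periodic[of 0] by simp
  have "robot_pos p f g (k 0) (\<tau> 1) = robot_pos p f g (k 0) (\<tau> (Suc P))"
    using same leaves_at_link[of 0] leaves_at_link[of P] by (simp add: transition_def)
  from robot_pos_shift[OF this, of "\<tau> P - (\<tau> (Suc P) - \<tau> 1)"]
  have "robot_pos p f g (k 0) (\<tau> P - (\<tau> (Suc P) - \<tau> 1)) = linkpt p (k 0) (k q)"
    using same arrives_at_link[of q] q by (simp add: transition_def)
  moreover have "\<tau> P - (\<tau> (Suc P) - \<tau> 1) < \<tau> 1" using tau_less[of P "Suc P"] by simp
  ultimately show ?thesis
    using link_time_outside[of 0] edge[of q] same q by (fastforce simp: transition_def insert_commute)
qed

lemma crosses_periodic:
  assumes "\<tau> 0 < t"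
  shows "crosses k \<tau> a b t \<longleftrightarrow> crosses k \<tau> a b (t + (\<tau> (Suc P) - \<tau> 1))"
proof
  assume "crosses k \<tau> a b t"
  then obtain s where "transition s = (a, b)" "\<tau> (Suc s) = t"
    unfolding crosses_def transition_def by blast
  then show "crosses k \<tau> a b (t + (\<tau> (Suc P) - \<tau> 1))"
    unfolding crosses_def using periodic[of s] tau_periodic[of s]
    by (intro exI[of _ "s + P"]) (simp add: transition_def)
next
  assume "crosses k \<tau> a b (t + (\<tau> (Suc P) - \<tau> 1))"
  then obtain s where s: "transition s = (a, b)" "\<tau> (Suc s) = t + (\<tau> (Suc P) - \<tau> 1)"
    unfolding crosses_def transition_def by blast
  have "P \<le> s"
  proof (rule ccontr)
    assume "\<not> P \<le> s"
    then have "\<tau> (Suc s) \<le> \<tau> P" using tau_less[of "Suc s" P] by (cases "Suc s = P") auto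
    then show False using s(2) tau_first_period assms by simp
  qed
  then obtain s0 where "s = s0 + P" using le_Suc_ex by (metis add.commute)
  then show "crosses k \<tau> a b t"
    unfolding crosses_def using s periodic[of s0] tau_periodic[of s0]
    by (intro exI[of _ s0]) (simp add: transition_def)
qed

end

lemma crossings_alternate:
  assumes "ring_crosses_itself k i j" "s < s'"
    and "{k s, k (Suc s)} = {i, j}" "{k s', k (Suc s')} = {i, j}"
    and between: "\<forall>s''. s < s'' \<and> s'' < s' \<longrightarrow> {k s'', k (Suc s'')} \<noteq> {i, j}"
  shows "k s' = k (Suc s) \<and> k (Suc s') = k s"
proof (rule ccontr)
  assume "\<not> ?thesis"
  with assms(3,4) edge_ends[of s] have same: "transition s = transition s'"
    by (auto simp: transition_def doubleton_eq_iff)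
  obtain u where u: "transition u = (k (Suc s), k s)"
    using assms(1,3) unfolding ring_crosses_itself_def transition_def
    by (auto simp: doubleton_eq_iff)
  obtain v where v: "Suc s \<le> v" "v < Suc s + (s' - s)" "transition v = transition u"
    using periodic_attains_in_window[of transition "s' - s"] transition_period[OF same assms(2)]
      assms(2) by fastforce
  show False
  proof (cases "v = s'")
    case True
    then show False using v(3) u same edge_ends[of s] by (simp add: transition_def)
  next
    case False
    then have "{k v, k (Suc v)} \<noteq> {i, j}" using between v(1,2) assms(2) by simp
    then show False using v(3) u assms(3) by (auto simp: transition_def)
  qed
qed

end

theorem lemma6:
  assumes "SCS n p \<epsilon> E f g"
    and "ring_traversal n p f g E k \<tau>"
    and "ring_crosses_itself k i j"
  shows "(\<exists>T > 0. \<forall>t > \<tau> 0.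
            (crosses k \<tau> i j t \<longleftrightarrow> crosses k \<tau> i j (t + T)) \<and>
            (crosses k \<tau> j i t \<longleftrightarrow> crosses k \<tau> j i (t + T)))
       \<and> (\<forall>s s'. s < s' \<and> {k s, k (Suc s)} = {i, j} \<and> {k s', k (Suc s')} = {i, j} \<and>
            (\<forall>s''. s < s'' \<and> s'' < s' \<longrightarrow> {k s'', k (Suc s'')} \<noteq> {i, j})
            \<longrightarrow> k s' = k (Suc s) \<and> k (Suc s') = k s)"
proof -
  interpret starving_robot n p \<epsilon> E f g k \<tau> using assms(1,2) by unfold_locales
  obtain P where P: "P > 0" "\<And>m. transition (m + P) = transition m"
    using transition_periodic by blast
  define T where "T = \<tau> (Suc P) - \<tau> 1"
  have "T > 0" using tau_less[of 1 "Suc P"] P(1) unfolding T_def by simp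
  moreover have "crosses k \<tau> a b t \<longleftrightarrow> crosses k \<tau> a b (t + T)" if "\<tau> 0 < t" for a b t
    using crosses_periodic[OF P that] unfolding T_def .
  ultimately show ?thesis
    using crossings_alternate[OF assms(3)] by blast
qed

end
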